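(* Let $\alpha\in(0,1)$, $a_0,a_1\in\mathbb{C}$, and let $\lambda_1,\lambda_2$ be the roots of $\lambda^2+a_1\lambda+a_0$. Consider ${}^LD^{2\circ\alpha}x+a_1{}^LD^\alpha x+a_0x=0$ with $x(0)=x_0$, ${}^LD^\alpha x(0)=x_{0,1}$, and let $\mathcal{S}$ be its solution space (without initial conditions). If $\lambda_1\neq\lambda_2$, the solution on $[0,\infty)$ is $$x(t)=\frac{x_{0,1}-\lambda_2x_0}{\lambda_1-\lambda_2}\mathcal{E}_\alpha(\lambda_1t)+\frac{\lambda_1x_0-x_{0,1}}{\lambda_1-\lambda_2}\mathcal{E}_\alpha(\lambda_2t),$$ and $\{\mathcal{E}_\alpha(\lambda_1t),\mathcal{E}_\alpha(\lambda_2t)\}$ is a basis of $\mathcal{S}$. If $\lambda_1=\lambda_2=\lambda$, the solution on $[0,\infty)$ is $x(t)=x_0\mathcal{E}_\alpha(\lambda t)+(x_{0,1}-\lambda x_0)\,t\,\mathcal{E}_\alpha'(\lambda t)$, and $\{\mathcal{E}_\alpha(\lambda t),t\mathcal{E}_\alpha'(\lambda t)\}$ is a basis of $\mathcal{S}$.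
   Context: $\mathcal{E}_\alpha(s)=\sum_{n=0}^\infty\frac{s^n}{\Gamma(2-\alpha)^n\prod_{j=1}^n\frac{\Gamma(j+1)}{\Gamma(j+1-\alpha)}}$ (entire), $\mathcal{E}_\alpha'$ its ordinary derivative. Solutions are taken among functions on $[0,\infty)$ given by everywhere convergent power series, with the equation holding for all $t\ge0$. ${}^LD^\alpha x(t)=\frac{\Gamma(2-\alpha)}{t^{1-\alpha}}\cdot\frac{1}{\Gamma(1-\alpha)}\int_0^t (t-\tau)^{-\alpha}x'(\tau)d\tau$ for $t>0$; on power series it acts termwise: ${}^LD^\alpha\sum_nx_nt^n=\sum_nx_{n+1}\frac{\Gamma(n+2)\Gamma(2-\alpha)}{\Gamma(n+2-\alpha)}t^n$, which also defines the value at $t=0$. ${}^LD^{2\circ\alpha}={}^LD^\alpha\circ{}^LD^\alpha$. *)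

theory Defs
  imports "HOL-Analysis.Analysis"
begin

definition Ealpha :: "real \<Rightarrow> complex \<Rightarrow> complex" where
  "Ealpha \<alpha> s = (\<Sum>n. s ^ n /
      complex_of_real (Gamma (2 - \<alpha>) ^ n *
        (\<Prod>j=1..n. Gamma (real j + 1) / Gamma (real j + 1 - \<alpha>))))"

definition Ealpha' :: "real \<Rightarrow> complex \<Rightarrow> complex" where
  "Ealpha' \<alpha> s = deriv (Ealpha \<alpha>) s"

text \<open>Functions on [0,inf) given by power series with coefficients c, convergent for all t >= 0.\<close>
definition ps_conv :: "(nat \<Rightarrow> complex) \<Rightarrow> bool" where
  "ps_conv c \<longleftrightarrow> (\<forall>t::real. 0 \<le> t \<longrightarrow> summable (\<lambda>n. c n * complex_of_real t ^ n))"

definition ps_eval :: "(nat \<Rightarrow> complex) \<Rightarrow> real \<Rightarrow> complex" where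
  "ps_eval c t = (\<Sum>n. c n * complex_of_real t ^ n)"

text \<open>Termwise action of the operator LD^alpha on power-series coefficients.\<close>
definition LD :: "real \<Rightarrow> (nat \<Rightarrow> complex) \<Rightarrow> nat \<Rightarrow> complex" where
  "LD \<alpha> c n = c (Suc n) *
     complex_of_real (Gamma (real n + 2) * Gamma (2 - \<alpha>) / Gamma (real n + 2 - \<alpha>))"

text \<open>c is (the coefficient sequence of) a solution of LD^{2 o alpha} x + a1 LD^alpha x + a0 x = 0 on [0,inf).\<close>
definition is_sol :: "real \<Rightarrow> complex \<Rightarrow> complex \<Rightarrow> (nat \<Rightarrow> complex) \<Rightarrow> bool" where
  "is_sol \<alpha> a1 a0 c \<longleftrightarrow> ps_conv c \<and> ps_conv (LD \<alpha> c) \<and> ps_conv (LD \<alpha> (LD \<alpha> c)) \<and>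
     (\<forall>t::real. 0 \<le> t \<longrightarrow>
        ps_eval (LD \<alpha> (LD \<alpha> c)) t + a1 * ps_eval (LD \<alpha> c) t + a0 * ps_eval c t = 0)"

definition is_ivp_sol :: "real \<Rightarrow> complex \<Rightarrow> complex \<Rightarrow> complex \<Rightarrow> complex \<Rightarrow> (nat \<Rightarrow> complex) \<Rightarrow> bool" where
  "is_ivp_sol \<alpha> a1 a0 x0 x01 c \<longleftrightarrow>
     is_sol \<alpha> a1 a0 c \<and> ps_eval c 0 = x0 \<and> ps_eval (LD \<alpha> c) 0 = x01"

definition sol_space :: "real \<Rightarrow> complex \<Rightarrow> complex \<Rightarrow> (real \<Rightarrow> complex) set" where
  "sol_space \<alpha> a1 a0 = {x. \<exists>c. is_sol \<alpha> a1 a0 c \<and> (\<forall>t. 0 \<le> t \<longrightarrow> x t = ps_eval c t)}"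

definition is_basis2 :: "(real \<Rightarrow> complex) set \<Rightarrow> (real \<Rightarrow> complex) \<Rightarrow> (real \<Rightarrow> complex) \<Rightarrow> bool" where
  "is_basis2 S f g \<longleftrightarrow> f \<in> S \<and> g \<in> S \<and>
     (\<forall>u v::complex. (\<forall>t::real. 0 \<le> t \<longrightarrow> u * f t + v * g t = 0) \<longrightarrow> u = 0 \<and> v = 0) \<and>
     (\<forall>x\<in>S. \<exists>u v::complex. \<forall>t::real. 0 \<le> t \<longrightarrow> x t = u * f t + v * g t)"

end

theory Submission
  imports Defs "HOL-Complex_Analysis.Cauchy_Integral_Formula"
begin

(*
  Write a power series solution as x(t) = (SUM n. e_n * d_n * t^n), where e_n are the Taylor
  coefficients of E_alpha. The Gamma factors in LD^alpha are exactly e_n / e_(n+1), so LD^alpha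
  acts on d as the shift n |-> n + 1, and by the identity theorem for power series the equation
  becomes the recurrence d_(n+2) + a1 * d_(n+1) + a0 * d_n = 0, whose characteristic polynomial is
  lambda^2 + a1 * lambda + a0. Its solutions are determined by d_0 = x(0) and d_1 = LD^alpha x(0)
  and are spanned by lambda1^n, lambda2^n (resp. lambda^n, n * lambda^(n-1) for a double root);
  the corresponding series are E_alpha(lambda_i t) (resp. E_alpha(lambda t), t E_alpha'(lambda t)).
  All series converge everywhere: solutions of the recurrence grow at most exponentially, while
  Wendel's inequality gives e_(n+1) / e_n <= (n+1)^(-alpha) / Gamma(2 - alpha), which tends to 0.
*)

definition Ealpha_coeff :: "real \<Rightarrow> nat \<Rightarrow> real" where
  "Ealpha_coeff \<alpha> n =
     inverse (Gamma (2 - \<alpha>) ^ n * (\<Prod>j=1..n. Gamma (real j + 1) / Gamma (real j + 1 - \<alpha>)))"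

lemma Ealpha_coeff_pos: "\<alpha> < 1 \<Longrightarrow> 0 < Ealpha_coeff \<alpha> n"
  unfolding Ealpha_coeff_def
  by (intro positive_imp_inverse_positive mult_pos_pos zero_less_power prod_pos)
     (auto intro!: divide_pos_pos)

lemma Ealpha_coeff_neq_0: "\<alpha> < 1 \<Longrightarrow> Ealpha_coeff \<alpha> n \<noteq> 0"
  using Ealpha_coeff_pos less_irrefl by metis

lemma Ealpha_coeff_0 [simp]: "Ealpha_coeff \<alpha> 0 = 1"
  by (simp add: Ealpha_coeff_def)

lemma Ealpha_coeff_Suc:
  "Ealpha_coeff \<alpha> (Suc n) =
     Ealpha_coeff \<alpha> n * (Gamma (real n + 2 - \<alpha>) / (Gamma (2 - \<alpha>) * Gamma (real n + 2)))"
  by (simp add: Ealpha_coeff_def prod.nat_ivl_Suc' divide_inverse mult_ac add_ac)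

lemma Ealpha_eq_powser: "Ealpha \<alpha> s = (\<Sum>n. of_real (Ealpha_coeff \<alpha> n) * s ^ n)"
  unfolding Ealpha_def Ealpha_coeff_def by (simp add: divide_inverse mult.commute)

text \<open>Wendel's inequality, from the log-convexity of \<open>Gamma\<close>.\<close>
lemma Gamma_add_le_powr_mult_Gamma:
  fixes x s :: real
  assumes "0 < x" "0 \<le> s" "s \<le> 1"
  shows "Gamma (x + s) \<le> x powr s * Gamma x"
proof -
  have "(ln \<circ> Gamma) ((1 - s) *\<^sub>R x + s *\<^sub>R (x + 1)) \<le> (1 - s) * (ln \<circ> Gamma) x + s * (ln \<circ> Gamma) (x + 1)"
    by (rule convex_onD[OF log_convex_Gamma_real]) (use assms in auto)
  moreover have "ln (Gamma (x + 1)) = ln x + ln (Gamma x)"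
  proof -
    have "Gamma (x + 1) = x * Gamma x"
      using assms by (intro Gamma_plus1) auto
    moreover have "0 < Gamma x"
      using assms by (intro Gamma_real_pos) simp
    ultimately show ?thesis
      using assms(1) by (simp add: ln_mult_pos)
  qed
  ultimately have "ln (Gamma (x + s)) \<le> s * ln x + ln (Gamma x)"
    by (simp add: algebra_simps)
  then have "exp (ln (Gamma (x + s))) \<le> exp (s * ln x + ln (Gamma x))"
    by simp
  then show ?thesis
    using assms by (simp add: exp_add powr_def)
qed

lemma Ealpha_coeff_Suc_le:
  assumes "0 \<le> \<alpha>" "\<alpha> < 1"
  shows "Ealpha_coeff \<alpha> (Suc n) \<le> Ealpha_coeff \<alpha> n * ((real n + 1) powr (-\<alpha>) / Gamma (2 - \<alpha>))"
proof -
  have "Gamma (real n + 2 - \<alpha>) \<le> (real n + 1) powr (1 - \<alpha>) * Gamma (real n + 1)"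
    using Gamma_add_le_powr_mult_Gamma[of "real n + 1" "1 - \<alpha>"] assms by (simp add: algebra_simps)
  also have "\<dots> = (real n + 1) powr (-\<alpha>) * Gamma (real n + 2)"
  proof -
    have "Gamma (real n + 1 + 1) = (real n + 1) * Gamma (real n + 1)"
      by (intro Gamma_plus1) auto
    then show ?thesis
      by (simp add: powr_diff field_simps add_ac powr_minus)
  qed
  finally have "Gamma (real n + 2 - \<alpha>) \<le> (real n + 1) powr (-\<alpha>) * Gamma (real n + 2)" .
  moreover have "0 < Gamma (2 - \<alpha>)" "0 < Gamma (real n + 2)" "0 < Ealpha_coeff \<alpha> n"
    using assms by (auto intro: Ealpha_coeff_pos)
  ultimately show ?thesis
    by (simp add: Ealpha_coeff_Suc field_simps)
qed

lemma summable_Ealpha_coeff: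
  assumes "0 < \<alpha>" "\<alpha> < 1"
  shows "summable (\<lambda>n. Ealpha_coeff \<alpha> n * x ^ n)"
proof -
  have "Gamma (2 - \<alpha>) \<noteq> 0"
    using assms by (auto simp: Gamma_eq_zero_iff)
  have "filterlim (\<lambda>n. real n + 1) at_top sequentially"
    by (subst add.commute) (rule filterlim_tendsto_add_at_top[OF tendsto_const filterlim_real_sequentially])
  then have "((\<lambda>n. (real n + 1) powr (-\<alpha>) / Gamma (2 - \<alpha>) * \<bar>x\<bar>) \<longlongrightarrow> 0 / Gamma (2 - \<alpha>) * \<bar>x\<bar>) sequentially"
    using assms \<open>Gamma (2 - \<alpha>) \<noteq> 0\<close> by (intro tendsto_intros tendsto_neg_powr) auto
  then have "eventually (\<lambda>n. (real n + 1) powr (-\<alpha>) / Gamma (2 - \<alpha>) * \<bar>x\<bar> < 1 / 2) sequentially"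
    by (intro order_tendstoD) auto
  then obtain N where N: "\<And>n. N \<le> n \<Longrightarrow> (real n + 1) powr (-\<alpha>) / Gamma (2 - \<alpha>) * \<bar>x\<bar> < 1 / 2"
    by (auto simp: eventually_sequentially)
  show ?thesis
  proof (rule summable_ratio_test[of "1 / 2" N])
    fix n assume "N \<le> n"
    have "0 < Ealpha_coeff \<alpha> (Suc n)"
      using assms by (intro Ealpha_coeff_pos)
    then have "norm (Ealpha_coeff \<alpha> (Suc n) * x ^ Suc n) = Ealpha_coeff \<alpha> (Suc n) * \<bar>x\<bar> * \<bar>x\<bar> ^ n"
      by (simp add: abs_mult power_abs mult_ac)
    also have "\<dots> \<le> Ealpha_coeff \<alpha> n * ((real n + 1) powr (-\<alpha>) / Gamma (2 - \<alpha>)) * \<bar>x\<bar> * \<bar>x\<bar> ^ n"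
      using assms by (intro mult_right_mono Ealpha_coeff_Suc_le) auto
    also have "\<dots> = Ealpha_coeff \<alpha> n * ((real n + 1) powr (-\<alpha>) / Gamma (2 - \<alpha>) * \<bar>x\<bar>) * \<bar>x\<bar> ^ n"
      by (simp add: mult.assoc)
    also have "\<dots> \<le> Ealpha_coeff \<alpha> n * (1 / 2) * \<bar>x\<bar> ^ n"
      using N[OF \<open>N \<le> n\<close>] Ealpha_coeff_pos[of \<alpha> n] assms
      by (intro mult_right_mono mult_left_mono) auto
    also have "\<dots> = 1 / 2 * norm (Ealpha_coeff \<alpha> n * x ^ n)"
      using Ealpha_coeff_pos[of \<alpha> n] assms by (simp add: abs_mult power_abs)
    finally show "norm (Ealpha_coeff \<alpha> (Suc n) * x ^ Suc n) \<le> 1 / 2 * norm (Ealpha_coeff \<alpha> n * x ^ n)" .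
  qed simp
qed

definition Ealpha_weighted :: "real \<Rightarrow> (nat \<Rightarrow> complex) \<Rightarrow> nat \<Rightarrow> complex" where
  "Ealpha_weighted \<alpha> d n = of_real (Ealpha_coeff \<alpha> n) * d n"

lemma Ealpha_weighted_lincomb:
  "Ealpha_weighted \<alpha> (\<lambda>n. u * p n + v * q n) = (\<lambda>n. u * Ealpha_weighted \<alpha> p n + v * Ealpha_weighted \<alpha> q n)"
  by (simp add: Ealpha_weighted_def fun_eq_iff algebra_simps)

lemma LD_Ealpha_weighted:
  assumes "\<alpha> < 1"
  shows "LD \<alpha> (Ealpha_weighted \<alpha> d) = Ealpha_weighted \<alpha> (\<lambda>n. d (Suc n))"
proof
  fix n
  let ?G = "Gamma (real n + 2) * Gamma (2 - \<alpha>) / Gamma (real n + 2 - \<alpha>)"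
  have "Gamma (real n + 2 - \<alpha>) \<noteq> 0" "Gamma (real n + 2) \<noteq> 0" "Gamma (2 - \<alpha>) \<noteq> 0"
    using assms by (auto simp: Gamma_eq_zero_iff)
  then have shift: "Ealpha_coeff \<alpha> (Suc n) * ?G = Ealpha_coeff \<alpha> n"
    by (simp add: Ealpha_coeff_Suc field_simps)
  have "LD \<alpha> (Ealpha_weighted \<alpha> d) n = of_real (Ealpha_coeff \<alpha> (Suc n) * ?G) * d (Suc n)"
    by (simp add: LD_def Ealpha_weighted_def mult_ac)
  then show "LD \<alpha> (Ealpha_weighted \<alpha> d) n = Ealpha_weighted \<alpha> (\<lambda>n. d (Suc n)) n"
    by (simp only: shift Ealpha_weighted_def)
qed

lemma summable_Ealpha_weighted:
  assumes "0 < \<alpha>" "\<alpha> < 1" and bound: "\<And>n. norm (d n) \<le> K * R ^ n"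
  shows "summable (\<lambda>n. Ealpha_weighted \<alpha> d n * z ^ n)"
proof (rule summable_comparison_test')
  show "summable (\<lambda>n. K * (Ealpha_coeff \<alpha> n * (R * norm z) ^ n))"
    using summable_Ealpha_coeff[OF assms(1,2)] by (rule summable_mult)
  fix n
  have e: "0 \<le> Ealpha_coeff \<alpha> n"
    using Ealpha_coeff_pos[OF assms(2)] less_imp_le by blast
  have "norm (Ealpha_weighted \<alpha> d n * z ^ n) = Ealpha_coeff \<alpha> n * norm (d n) * norm z ^ n"
    using e by (simp add: Ealpha_weighted_def norm_mult norm_power)
  also have "\<dots> \<le> Ealpha_coeff \<alpha> n * (K * R ^ n) * norm z ^ n"
    using e bound by (intro mult_right_mono mult_left_mono) auto
  finally show "norm (Ealpha_weighted \<alpha> d n * z ^ n) \<le> K * (Ealpha_coeff \<alpha> n * (R * norm z) ^ n)"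
    by (simp add: power_mult_distrib mult_ac)
qed

lemma ps_eval_at_0 [simp]: "ps_eval c 0 = c 0"
  unfolding ps_eval_def using powser_zero[of c] by simp

lemma ps_conv_imp_summable:
  assumes "ps_conv c"
  shows "summable (\<lambda>n. c n * z ^ n)"
proof (rule powser_inside)
  show "summable (\<lambda>n. c n * complex_of_real (norm z + 1) ^ n)"
  proof -
    have "0 \<le> norm z + 1"
      by simp
    with assms show ?thesis
      unfolding ps_conv_def by blast
  qed
qed simp

lemma powser_eq_zero_on_nonneg_reals:
  fixes b :: "nat \<Rightarrow> complex"
  assumes summable: "\<And>z. summable (\<lambda>n. b n * z ^ n)"
    and zero: "\<And>t. 0 \<le> t \<Longrightarrow> (\<Sum>n. b n * complex_of_real t ^ n) = 0"
  shows "b m = 0"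
proof (rule ccontr)
  assume "b m \<noteq> 0"
  have "b 0 = 0"
    using zero[of 0] by simp
  with \<open>b m \<noteq> 0\<close> have "0 < m"
    by (cases m) auto
  define f where "f z = (\<Sum>n. b n * z ^ n)" for z
  obtain s where "0 < s" and nz: "\<And>z. z \<in> cball 0 s - {0} \<Longrightarrow> f z \<noteq> 0"
  proof (rule powser_0_nonzero[where r=1 and a=b and \<xi>=0 and f=f and m=m])
    show "(\<lambda>n. b n * (z - 0) ^ n) sums f z" for z
      using summable[of z] by (simp add: f_def summable_sums)
    show "f 0 = 0"
      using \<open>b 0 = 0\<close> by (simp add: f_def)
  qed (use \<open>b m \<noteq> 0\<close> \<open>0 < m\<close> in auto)
  have "f (complex_of_real s) = 0"
    using zero[of s] \<open>0 < s\<close> by (simp add: f_def)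
  moreover have "complex_of_real s \<in> cball 0 s - {0}"
    using \<open>0 < s\<close> by simp
  ultimately show False
    using nz by blast
qed

lemma ps_eval_lincomb:
  assumes "ps_conv A" "ps_conv B"
  shows "ps_eval (\<lambda>n. u * A n + v * B n) t = u * ps_eval A t + v * ps_eval B t"
proof -
  let ?T = "complex_of_real t"
  have "(\<lambda>n. u * (A n * ?T ^ n) + v * (B n * ?T ^ n)) sums (u * ps_eval A t + v * ps_eval B t)"
    unfolding ps_eval_def using assms
    by (intro sums_add sums_mult summable_sums ps_conv_imp_summable)
  then show ?thesis
    unfolding ps_eval_def by (simp add: sums_iff algebra_simps)
qed

lemma ps_eval_combination:
  assumes "ps_conv A" "ps_conv B" "ps_conv C"
  shows "ps_eval (\<lambda>n. A n + a1 * B n + a0 * C n) t = ps_eval A t + a1 * ps_eval B t + a0 * ps_eval C t"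
proof -
  let ?T = "complex_of_real t"
  have "(\<lambda>n. A n * ?T ^ n + a1 * (B n * ?T ^ n) + a0 * (C n * ?T ^ n))
          sums (ps_eval A t + a1 * ps_eval B t + a0 * ps_eval C t)"
    unfolding ps_eval_def using assms
    by (intro sums_add sums_mult summable_sums ps_conv_imp_summable)
  then show ?thesis
    unfolding ps_eval_def by (simp add: sums_iff algebra_simps)
qed

definition recurrence2 :: "complex \<Rightarrow> complex \<Rightarrow> (nat \<Rightarrow> complex) \<Rightarrow> bool" where
  "recurrence2 a1 a0 d \<longleftrightarrow> (\<forall>n. d (Suc (Suc n)) + a1 * d (Suc n) + a0 * d n = 0)"

lemma recurrence2_shift: "recurrence2 a1 a0 d \<Longrightarrow> recurrence2 a1 a0 (\<lambda>n. d (Suc n))"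
  by (simp add: recurrence2_def)

lemma recurrence2_lincomb:
  assumes "recurrence2 a1 a0 p" "recurrence2 a1 a0 q"
  shows "recurrence2 a1 a0 (\<lambda>n. u * p n + v * q n)"
  unfolding recurrence2_def
proof
  fix n
  have "u * p (Suc (Suc n)) + v * q (Suc (Suc n)) + a1 * (u * p (Suc n) + v * q (Suc n))
          + a0 * (u * p n + v * q n)
        = u * (p (Suc (Suc n)) + a1 * p (Suc n) + a0 * p n)
          + v * (q (Suc (Suc n)) + a1 * q (Suc n) + a0 * q n)"
    by (simp add: algebra_simps)
  then show "u * p (Suc (Suc n)) + v * q (Suc (Suc n)) + a1 * (u * p (Suc n) + v * q (Suc n))
               + a0 * (u * p n + v * q n) = 0"
    using assms by (simp add: recurrence2_def)
qed

lemma recurrence2_unique: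
  assumes "recurrence2 a1 a0 d" "recurrence2 a1 a0 e" "d 0 = e 0" "d 1 = e 1"
  shows "d = e"
proof -
  have "d n = e n \<and> d (Suc n) = e (Suc n)" for n
  proof (induction n)
    case (Suc n)
    have "d (Suc (Suc n)) = - a1 * d (Suc n) - a0 * d n"
      using assms(1) by (simp add: recurrence2_def eq_neg_iff_add_eq_0 algebra_simps)
    moreover have "e (Suc (Suc n)) = - a1 * e (Suc n) - a0 * e n"
      using assms(2) by (simp add: recurrence2_def eq_neg_iff_add_eq_0 algebra_simps)
    ultimately show ?case
      using Suc by simp
  qed (use assms in simp)
  then show ?thesis
    by blast
qed

lemma recurrence2_bound:
  assumes "recurrence2 a1 a0 d"
  shows "norm (d n) \<le> (norm (d 0) + norm (d 1)) * (1 + norm a1 + norm a0) ^ n"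
proof -
  define K where "K = norm (d 0) + norm (d 1)"
  define R where "R = 1 + norm a1 + norm a0"
  have "1 \<le> R" "0 \<le> K"
    by (simp_all add: R_def K_def)
  have "norm (d n) \<le> K * R ^ n \<and> norm (d (Suc n)) \<le> K * R ^ Suc n" for n
  proof (induction n)
    case 0
    have "K \<le> K * R"
      using \<open>1 \<le> R\<close> \<open>0 \<le> K\<close> mult_left_mono[of 1 R K] by simp
    moreover have "norm (d 0) \<le> K" "norm (d 1) \<le> K"
      by (simp_all add: K_def)
    ultimately show ?case
      by simp
  next
    case (Suc n)
    have "d (Suc (Suc n)) = - (a1 * d (Suc n) + a0 * d n)"
      using assms by (simp add: recurrence2_def eq_neg_iff_add_eq_0 algebra_simps)
    then have "norm (d (Suc (Suc n))) = norm (a1 * d (Suc n) + a0 * d n)"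
      by (simp only: norm_minus_cancel)
    also have "\<dots> \<le> norm a1 * norm (d (Suc n)) + norm a0 * norm (d n)"
      using norm_triangle_ineq[of "a1 * d (Suc n)" "a0 * d n"] by (simp add: norm_mult)
    also have "\<dots> \<le> norm a1 * (K * R ^ Suc n) + norm a0 * (K * R ^ Suc n)"
      using Suc.IH \<open>1 \<le> R\<close> \<open>0 \<le> K\<close> mult_left_mono[of "R ^ n" "R ^ Suc n" K]
      by (intro add_mono mult_left_mono) auto
    also have "\<dots> \<le> K * R ^ Suc (Suc n)"
      using \<open>0 \<le> K\<close> \<open>1 \<le> R\<close> by (simp add: R_def algebra_simps mult_right_mono)
    finally show ?case
      using Suc.IH by simp
  qed
  then show ?thesis
    by (simp add: K_def R_def)
qed

lemma recurrence2_power: "l ^ 2 + a1 * l + a0 = 0 \<Longrightarrow> recurrence2 a1 a0 (\<lambda>n. l ^ n)"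
proof -
  assume root: "l ^ 2 + a1 * l + a0 = 0"
  have "l ^ Suc (Suc n) + a1 * l ^ Suc n + a0 * l ^ n = l ^ n * (l ^ 2 + a1 * l + a0)" for n
    by (simp add: power2_eq_square algebra_simps)
  then show ?thesis
    unfolding recurrence2_def using root by simp
qed

lemma recurrence2_nat_times_power: "recurrence2 (- 2 * l) (l ^ 2) (\<lambda>n. of_nat n * l ^ (n - 1))"
  unfolding recurrence2_def
proof
  fix n
  show "of_nat (Suc (Suc n)) * l ^ (Suc (Suc n) - 1) + - 2 * l * (of_nat (Suc n) * l ^ (Suc n - 1))
          + l ^ 2 * (of_nat n * l ^ (n - 1)) = 0"
    by (cases n) (simp_all add: power2_eq_square algebra_simps)
qed

lemma ps_conv_Ealpha_weighted:
  assumes "0 < \<alpha>" "\<alpha> < 1" "recurrence2 a1 a0 d"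
  shows "ps_conv (Ealpha_weighted \<alpha> d)"
  unfolding ps_conv_def
  using summable_Ealpha_weighted[OF assms(1,2) recurrence2_bound[OF assms(3)]] by blast

lemma ps_eval_Ealpha_weighted_lincomb:
  assumes "0 < \<alpha>" "\<alpha> < 1" "recurrence2 a1 a0 p" "recurrence2 a1 a0 q"
  shows "ps_eval (Ealpha_weighted \<alpha> (\<lambda>n. u * p n + v * q n)) t
           = u * ps_eval (Ealpha_weighted \<alpha> p) t + v * ps_eval (Ealpha_weighted \<alpha> q) t"
  unfolding Ealpha_weighted_lincomb
  using assms by (intro ps_eval_lincomb ps_conv_Ealpha_weighted)

lemma ps_eval_Ealpha_weighted_power:
  "ps_eval (Ealpha_weighted \<alpha> (\<lambda>n. l ^ n)) = (\<lambda>t. Ealpha \<alpha> (l * complex_of_real t))"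
  by (simp add: fun_eq_iff ps_eval_def Ealpha_weighted_def Ealpha_eq_powser power_mult_distrib mult_ac)

lemma ps_eval_Ealpha_weighted_nat_times_power:
  assumes "0 < \<alpha>" "\<alpha> < 1"
  shows "ps_eval (Ealpha_weighted \<alpha> (\<lambda>n. of_nat n * l ^ (n - 1)))
           = (\<lambda>t. complex_of_real t * Ealpha' \<alpha> (l * complex_of_real t))"
proof
  fix t :: real
  let ?c = "\<lambda>n. complex_of_real (Ealpha_coeff \<alpha> n)"
  let ?d = "Ealpha_weighted \<alpha> (\<lambda>n. of_nat n * l ^ (n - 1))"
  have "summable (\<lambda>n. ?c n * z ^ n)" for z
    using summable_Ealpha_weighted[OF assms, of "\<lambda>_. 1" 1 1 z] by (simp add: Ealpha_weighted_def)
  then have "(Ealpha \<alpha> has_field_derivative (\<Sum>n. diffs ?c n * s ^ n)) (at s)" for s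
    unfolding Ealpha_eq_powser[abs_def] by (rule termdiffs_strong_converges_everywhere)
  then have E': "Ealpha' \<alpha> s = (\<Sum>n. diffs ?c n * s ^ n)" for s
    unfolding Ealpha'_def by (rule DERIV_imp_deriv)
  have "ps_eval ?d t = ?d 0 + (\<Sum>n. ?d (Suc n) * complex_of_real t ^ n) * complex_of_real t"
    unfolding ps_eval_def
    by (rule powser_split_head(1)[OF ps_conv_imp_summable])
       (rule ps_conv_Ealpha_weighted[OF assms recurrence2_nat_times_power])
  also have "?d 0 = 0"
    by (simp add: Ealpha_weighted_def)
  also have "(\<lambda>n. ?d (Suc n) * complex_of_real t ^ n) = (\<lambda>n. diffs ?c n * (l * complex_of_real t) ^ n)"
    by (simp add: fun_eq_iff diffs_def Ealpha_weighted_def power_mult_distrib mult_ac)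
  finally show "ps_eval ?d t = complex_of_real t * Ealpha' \<alpha> (l * complex_of_real t)"
    by (simp add: E' mult.commute)
qed

lemma is_sol_Ealpha_weighted_iff:
  assumes "0 < \<alpha>" "\<alpha> < 1"
  shows "is_sol \<alpha> a1 a0 (Ealpha_weighted \<alpha> d) \<longleftrightarrow> recurrence2 a1 a0 d"
proof -
  let ?E = "Ealpha_weighted \<alpha>"
  define r where "r n = d (Suc (Suc n)) + a1 * d (Suc n) + a0 * d n" for n
  have E_r: "?E r = (\<lambda>n. ?E (\<lambda>n. d (Suc (Suc n))) n + a1 * ?E (\<lambda>n. d (Suc n)) n + a0 * ?E d n)"
    by (simp add: fun_eq_iff r_def Ealpha_weighted_def algebra_simps)
  have LD2: "LD \<alpha> (LD \<alpha> (?E d)) = ?E (\<lambda>n. d (Suc (Suc n)))"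
    by (simp add: LD_Ealpha_weighted[OF assms(2)])
  show ?thesis
  proof
    assume "is_sol \<alpha> a1 a0 (?E d)"
    then have conv: "ps_conv (?E d)" "ps_conv (?E (\<lambda>n. d (Suc n)))" "ps_conv (?E (\<lambda>n. d (Suc (Suc n))))"
      and eq: "\<And>t. 0 \<le> t \<Longrightarrow> ps_eval (?E (\<lambda>n. d (Suc (Suc n)))) t
                 + a1 * ps_eval (?E (\<lambda>n. d (Suc n))) t + a0 * ps_eval (?E d) t = 0"
      unfolding is_sol_def LD2 LD_Ealpha_weighted[OF assms(2)] by auto
    have "?E r n = 0" for n
    proof (rule powser_eq_zero_on_nonneg_reals)
      show "summable (\<lambda>n. ?E r n * z ^ n)" for z
        unfolding E_r using conv
        by (simp add: distrib_right mult.assoc ps_conv_imp_summable summable_add summable_mult)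
      show "(\<Sum>n. ?E r n * complex_of_real t ^ n) = 0" if "0 \<le> t" for t
        using eq[OF that] ps_eval_combination[OF conv(3,2,1), of a1 a0 t]
        by (simp add: E_r ps_eval_def)
    qed
    then show "recurrence2 a1 a0 d"
      by (simp add: recurrence2_def Ealpha_weighted_def r_def Ealpha_coeff_neq_0[OF assms(2)])
  next
    assume rec: "recurrence2 a1 a0 d"
    then have conv: "ps_conv (?E d)" "ps_conv (?E (\<lambda>n. d (Suc n)))" "ps_conv (?E (\<lambda>n. d (Suc (Suc n))))"
      using assms by (auto intro!: ps_conv_Ealpha_weighted recurrence2_shift)
    have "ps_eval (?E r) t = 0" for t
      using rec by (simp add: r_def recurrence2_def Ealpha_weighted_def ps_eval_def)
    then show "is_sol \<alpha> a1 a0 (?E d)"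
      unfolding is_sol_def LD2 LD_Ealpha_weighted[OF assms(2)]
      using conv ps_eval_combination[OF conv(3,2,1)] by (simp add: E_r)
  qed
qed

lemma is_sol_imp_recurrence:
  assumes "0 < \<alpha>" "\<alpha> < 1" "is_sol \<alpha> a1 a0 c"
  obtains d where "c = Ealpha_weighted \<alpha> d" "recurrence2 a1 a0 d"
proof
  define d where "d n = c n / of_real (Ealpha_coeff \<alpha> n)" for n
  show c: "c = Ealpha_weighted \<alpha> d"
    by (simp add: fun_eq_iff d_def Ealpha_weighted_def Ealpha_coeff_neq_0[OF assms(2)])
  show "recurrence2 a1 a0 d"
    using assms is_sol_Ealpha_weighted_iff c by metis
qed

lemma Ealpha_weighted_initial_values:
  assumes "\<alpha> < 1"
  shows "ps_eval (Ealpha_weighted \<alpha> d) 0 = d 0" "ps_eval (LD \<alpha> (Ealpha_weighted \<alpha> d)) 0 = d 1"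
  by (simp_all add: LD_Ealpha_weighted[OF assms] Ealpha_weighted_def)

lemma is_ivp_sol_eq_lincomb:
  assumes "0 < \<alpha>" "\<alpha> < 1" "recurrence2 a1 a0 p" "recurrence2 a1 a0 q"
    and "u * p 0 + v * q 0 = x0" "u * p 1 + v * q 1 = x01"
    and "is_ivp_sol \<alpha> a1 a0 x0 x01 c"
  shows "ps_eval c t = u * ps_eval (Ealpha_weighted \<alpha> p) t + v * ps_eval (Ealpha_weighted \<alpha> q) t"
proof -
  obtain d where c: "c = Ealpha_weighted \<alpha> d" and rec: "recurrence2 a1 a0 d"
    using assms(1,2,7) is_sol_imp_recurrence unfolding is_ivp_sol_def by blast
  have "d = (\<lambda>n. u * p n + v * q n)"
    using assms rec Ealpha_weighted_initial_values[OF assms(2), of d]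
    by (intro recurrence2_unique recurrence2_lincomb) (auto simp: c is_ivp_sol_def)
  then show ?thesis
    using assms by (simp add: c ps_eval_Ealpha_weighted_lincomb)
qed

lemma linear_system2_solvable:
  fixes p0 p1 q0 q1 x y :: "'a::field"
  assumes "p0 * q1 - p1 * q0 \<noteq> 0"
  obtains u v where "u * p0 + v * q0 = x" "u * p1 + v * q1 = y"
proof
  show "(x * q1 - y * q0) / (p0 * q1 - p1 * q0) * p0 + (y * p0 - x * p1) / (p0 * q1 - p1 * q0) * q0 = x"
    "(x * q1 - y * q0) / (p0 * q1 - p1 * q0) * p1 + (y * p0 - x * p1) / (p0 * q1 - p1 * q0) * q1 = y"
    using assms by (simp_all add: divide_simps) (simp_all add: algebra_simps)
qed

lemma sol_space_basis:
  assumes "0 < \<alpha>" "\<alpha> < 1" "recurrence2 a1 a0 p" "recurrence2 a1 a0 q"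
    and det: "p 0 * q 1 - p 1 * q 0 \<noteq> 0"
  shows "is_basis2 (sol_space \<alpha> a1 a0) (ps_eval (Ealpha_weighted \<alpha> p)) (ps_eval (Ealpha_weighted \<alpha> q))"
  unfolding is_basis2_def
proof (intro conjI allI impI ballI)
  show "ps_eval (Ealpha_weighted \<alpha> p) \<in> sol_space \<alpha> a1 a0" "ps_eval (Ealpha_weighted \<alpha> q) \<in> sol_space \<alpha> a1 a0"
    using assms is_sol_Ealpha_weighted_iff unfolding sol_space_def by blast+
next
  fix u v
  assume zero: "\<forall>t\<ge>0. u * ps_eval (Ealpha_weighted \<alpha> p) t + v * ps_eval (Ealpha_weighted \<alpha> q) t = 0"
  let ?d = "\<lambda>n. u * p n + v * q n"
  have rec: "recurrence2 a1 a0 ?d"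
    using assms by (intro recurrence2_lincomb)
  have "Ealpha_weighted \<alpha> ?d n = 0" for n
  proof (rule powser_eq_zero_on_nonneg_reals)
    show "summable (\<lambda>n. Ealpha_weighted \<alpha> ?d n * z ^ n)" for z
      using assms rec by (intro ps_conv_imp_summable ps_conv_Ealpha_weighted)
    show "(\<Sum>n. Ealpha_weighted \<alpha> ?d n * complex_of_real t ^ n) = 0" if "0 \<le> t" for t
      using zero that ps_eval_Ealpha_weighted_lincomb[OF assms(1-4)] by (simp add: ps_eval_def)
  qed
  then have "?d 0 = 0" "?d 1 = 0"
    by (simp_all add: Ealpha_weighted_def Ealpha_coeff_neq_0[OF assms(2)])
  moreover have "u * (p 0 * q 1 - p 1 * q 0) = q 1 * ?d 0 - q 0 * ?d 1"
    "v * (p 0 * q 1 - p 1 * q 0) = p 0 * ?d 1 - p 1 * ?d 0"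
    by (simp_all add: algebra_simps)
  ultimately show "u = 0" "v = 0"
    using det by simp_all
next
  fix x
  assume "x \<in> sol_space \<alpha> a1 a0"
  then obtain c where c: "is_sol \<alpha> a1 a0 c" and x: "\<And>t. 0 \<le> t \<Longrightarrow> x t = ps_eval c t"
    unfolding sol_space_def by blast
  obtain u v where "u * p 0 + v * q 0 = ps_eval c 0" "u * p 1 + v * q 1 = ps_eval (LD \<alpha> c) 0"
    using linear_system2_solvable[OF det] by metis
  then have "ps_eval c t = u * ps_eval (Ealpha_weighted \<alpha> p) t + v * ps_eval (Ealpha_weighted \<alpha> q) t" for t
    using assms c by (intro is_ivp_sol_eq_lincomb) (auto simp: is_ivp_sol_def)
  then show "\<exists>u v. \<forall>t\<ge>0. x t = u * ps_eval (Ealpha_weighted \<alpha> p) t + v * ps_eval (Ealpha_weighted \<alpha> q) t"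
    using x by metis
qed

lemma fundamental_system:
  assumes "0 < \<alpha>" "\<alpha> < 1" "recurrence2 a1 a0 p" "recurrence2 a1 a0 q"
    and "p 0 * q 1 - p 1 * q 0 \<noteq> 0"
    and "u * p 0 + v * q 0 = x0" "u * p 1 + v * q 1 = x01"
  shows "(\<exists>c. is_ivp_sol \<alpha> a1 a0 x0 x01 c) \<and>
    (\<forall>c. is_ivp_sol \<alpha> a1 a0 x0 x01 c \<longrightarrow> (\<forall>t::real. 0 \<le> t \<longrightarrow>
       ps_eval c t = u * ps_eval (Ealpha_weighted \<alpha> p) t + v * ps_eval (Ealpha_weighted \<alpha> q) t)) \<and>
    is_basis2 (sol_space \<alpha> a1 a0) (ps_eval (Ealpha_weighted \<alpha> p)) (ps_eval (Ealpha_weighted \<alpha> q))"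
proof (intro conjI allI impI)
  let ?d = "\<lambda>n. u * p n + v * q n"
  have "is_sol \<alpha> a1 a0 (Ealpha_weighted \<alpha> ?d)"
    using assms by (simp add: is_sol_Ealpha_weighted_iff recurrence2_lincomb)
  then show "\<exists>c. is_ivp_sol \<alpha> a1 a0 x0 x01 c"
    using assms Ealpha_weighted_initial_values[OF assms(2), of ?d] unfolding is_ivp_sol_def by auto
qed (use assms is_ivp_sol_eq_lincomb sol_space_basis in auto)

theorem mainTheorem17:
  fixes \<alpha> :: real and a0 a1 l1 l2 x0 x01 :: complex
  assumes "0 < \<alpha>" and "\<alpha> < 1"
    and roots: "\<forall>z::complex. z ^ 2 + a1 * z + a0 = (z - l1) * (z - l2)"
  shows "(l1 \<noteq> l2 \<longrightarrow>
            (\<exists>c. is_ivp_sol \<alpha> a1 a0 x0 x01 c) \<and>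
            (\<forall>c. is_ivp_sol \<alpha> a1 a0 x0 x01 c \<longrightarrow>
               (\<forall>t::real. 0 \<le> t \<longrightarrow> ps_eval c t =
                  (x01 - l2 * x0) / (l1 - l2) * Ealpha \<alpha> (l1 * complex_of_real t)
                + (l1 * x0 - x01) / (l1 - l2) * Ealpha \<alpha> (l2 * complex_of_real t))) \<and>
            is_basis2 (sol_space \<alpha> a1 a0)
              (\<lambda>t. Ealpha \<alpha> (l1 * complex_of_real t)) (\<lambda>t. Ealpha \<alpha> (l2 * complex_of_real t)))
       \<and> (l1 = l2 \<longrightarrow>
            (\<exists>c. is_ivp_sol \<alpha> a1 a0 x0 x01 c) \<and>
            (\<forall>c. is_ivp_sol \<alpha> a1 a0 x0 x01 c \<longrightarrow>
               (\<forall>t::real. 0 \<le> t \<longrightarrow> ps_eval c t =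
                  x0 * Ealpha \<alpha> (l1 * complex_of_real t)
                + (x01 - l1 * x0) * complex_of_real t * Ealpha' \<alpha> (l1 * complex_of_real t))) \<and>
            is_basis2 (sol_space \<alpha> a1 a0)
              (\<lambda>t. Ealpha \<alpha> (l1 * complex_of_real t))
              (\<lambda>t. complex_of_real t * Ealpha' \<alpha> (l1 * complex_of_real t)))"
proof -
  have a0: "a0 = l1 * l2"
    using roots[rule_format, of 0] by simp
  have a1: "a1 = - (l1 + l2)"
    using roots[rule_format, of 1] by (simp add: a0 algebra_simps) (simp add: eq_neg_iff_add_eq_0 add_ac)
  have rec_power: "recurrence2 a1 a0 (\<lambda>n. l1 ^ n)" "recurrence2 a1 a0 (\<lambda>n. l2 ^ n)"
    by (intro recurrence2_power, simp add: a0 a1 power2_eq_square algebra_simps)+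
  show ?thesis
  proof (cases "l1 = l2")
    case False
    then have "l1 ^ 0 * l2 ^ 1 - l1 ^ 1 * l2 ^ 0 \<noteq> 0"
      by simp
    moreover have "(x01 - l2 * x0) / (l1 - l2) * l1 ^ 0 + (l1 * x0 - x01) / (l1 - l2) * l2 ^ 0 = x0"
      "(x01 - l2 * x0) / (l1 - l2) * l1 ^ 1 + (l1 * x0 - x01) / (l1 - l2) * l2 ^ 1 = x01"
      using False by (simp_all add: divide_simps) (simp_all add: algebra_simps)
    ultimately show ?thesis
      using fundamental_system[OF assms(1,2) rec_power] False
      by (simp add: ps_eval_Ealpha_weighted_power)
  next
    case True
    have "recurrence2 a1 a0 (\<lambda>n. of_nat n * l1 ^ (n - 1))"
      using recurrence2_nat_times_power[of l1] True by (simp add: a0 a1 power2_eq_square)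
    from fundamental_system[OF assms(1,2) rec_power(1) this, where u = x0 and v = "x01 - l1 * x0"]
    show ?thesis
      unfolding ps_eval_Ealpha_weighted_power ps_eval_Ealpha_weighted_nat_times_power[OF assms(1,2)]
      using True by (simp add: mult.assoc)
  qed
qed

end
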